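(* Let $\Gamma\subset PGL_{2n+2}(\mathbb{C})$ be a group of type $\mathcal{L}$, and suppose the homogeneous coordinates $[z':z'']$ are such that there is $R>0$ with $V_R\subset\Omega(\Gamma)$ and $g(V_R)\cap V_R=\emptyset$ for every $g\in\Gamma\setminus\{1\}$. Then the set $\mathcal{R}=\{\|C_g^{-1}\|: g\in\Gamma\setminus\{1\}\}$ is bounded in $\mathbb{R}$ if and only if the closure $\bar F$ of the $F$-region contains $V_{R'}$ for some $R'>0$.
   Context: $z'=(z^0,\dots,z^n)$, $z''=(z^{n+1},\dots,z^{2n+1})$; $V_R=\{[z':z'']\in\mathbb{P}^{2n+1}:\|z'\|>R\|z''\|\}$; $\|\cdot\|$ is the Euclidean norm and the operator norm. Each $g\in\Gamma\setminus\{1\}$ has a representative $\begin{pmatrix}A_g&B_g\\C_g&D_g\end{pmatrix}\in SL_{2n+2}(\mathbb{C})$ with $(n+1)\times(n+1)$ blocks, and under the hypothesis $C_g$ is invertible (norms below do not depend on the choice of representative). Put $\bar\Delta_g=\{[z':z'']:\|z''\|\le\|C_gz'+D_gz''\|\}$, $\bar\Delta=\bigcap_{g\in\Gamma\setminus\{1\}}\bar\Delta_g$, and the $F$-region $F=\operatorname{Int}\bar\Delta$. Type $\mathcal{L}$: an $n$-plane is an $n$-dimensional projective linear subspace of $\mathbb{P}^{2n+1}$; with $\mathcal{G}\subset\mathbb{P}^N=\mathbb{P}(\Lambda^{n+1}\mathbb{C}^{2n+2})$ the Plücker-embedded Grassmannian, $\hat\ell$ the Plücker point of $\ell$ and $\hat\sigma$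 the induced action; the limit image of a sequence of distinct projective transformations whose representatives (normalized so the largest entry has absolute value $1$) converge to $T$ is $\mathbb{P}(\operatorname{Im}T)$; a sequence in discrete $\Gamma$ is normal if it is of distinct elements and both it and $(\hat\sigma_\nu)$ have convergent normalized representatives; limit $n$-planes are those $\ell$ with $\hat\ell$ in the limit image of some $(\hat\sigma_\nu)$, $(\sigma_\nu)$ normal; $\Omega(\Gamma)$ is the complement of their union; $\Gamma$ is of type $\mathcal{L}$ if discrete and $\Omega(\Gamma)$ contains a domain containing an $n$-plane. *)

theory Defs
  imports "HOL-Analysis.Analysis"
begin

text \<open>CARD('n) = n+1. Homogeneous coordinates of P^{2n+1} are indexed by
  the type 'n + 'n: Inl i are the coordinates z', Inr i the coordinates z''.
  Projective points / subsets of P^{2n+1} are represented by their cones in C^{2n+2}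
  (nonzero vectors, closed under nonzero complex scaling).  A subgroup of PGL_{2n+2}(C)
  is represented by its full preimage in GL_{2n+2}(C).\<close>

definition smat :: "complex \<Rightarrow> complex^'m^'k \<Rightarrow> complex^'m^'k" where
  "smat c M = (\<chi> i j. c * M$i$j)"

definition is_scalar_mat :: "complex^'m^'m \<Rightarrow> bool" where
  "is_scalar_mat A \<longleftrightarrow> (\<exists>c. A = smat c (mat 1))"

definition proj_equiv :: "complex^'m^'k \<Rightarrow> complex^'m^'k \<Rightarrow> bool" where
  "proj_equiv A B \<longleftrightarrow> (\<exists>c. c \<noteq> 0 \<and> A = smat c B)"

definition pgl_subgroup :: "(complex^'m^'m) set \<Rightarrow> bool" where
  "pgl_subgroup G \<longleftrightarrow> mat 1 \<in> G \<and> (\<forall>A\<in>G. invertible A)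
     \<and> (\<forall>A\<in>G. \<forall>B\<in>G. A ** B \<in> G) \<and> (\<forall>A\<in>G. matrix_inv A \<in> G)
     \<and> (\<forall>A\<in>G. \<forall>c. c \<noteq> 0 \<longrightarrow> smat c A \<in> G)"

text \<open>Discreteness in PGL = discreteness of the preimage in SL (a finite cover).\<close>
definition pgl_discrete :: "(complex^'m^'m) set \<Rightarrow> bool" where
  "pgl_discrete G \<longleftrightarrow> (\<forall>A \<in> G \<inter> {B. det B = 1}. \<not> A islimpt (G \<inter> {B. det B = 1}))"

definition maxentry :: "complex^'m^'k \<Rightarrow> real" where
  "maxentry M = Max (range (\<lambda>(i,j). norm (M$i$j)))"

definition conv_normalized :: "(nat \<Rightarrow> complex^'m^'k) \<Rightarrow> complex^'m^'k \<Rightarrow> bool" where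
  "conv_normalized M T \<longleftrightarrow> (\<exists>c::nat \<Rightarrow> complex.
      (\<forall>v. c v \<noteq> 0 \<and> maxentry (smat (c v) (M v)) = 1)
      \<and> (\<lambda>v. smat (c v) (M v)) \<longlonglongrightarrow> T)"

definition limit_image :: "complex^'m^'k \<Rightarrow> (complex^'k) set" where
  "limit_image T = {y. y \<noteq> 0 \<and> y \<in> range (\<lambda>x. T *v x)}"

text \<open>A fixed enumeration of an (n+1)-subset of the index set, used to order rows/columns
  of minors (any fixed choice gives consistent Plucker coordinates and compound matrices).\<close>
definition enm :: "('n::finite + 'n) set \<Rightarrow> 'n \<Rightarrow> 'n + 'n" where
  "enm I = (SOME f. bij_betw f (UNIV::'n set) I)"

text \<open>Plucker coordinates of the n-plane spanned by the columns of W, indexed by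
  (n+1)-subsets of the coordinate index set (other coordinates are 0).\<close>
definition plk :: "complex^'n^('n::finite + 'n) \<Rightarrow> complex^(('n + 'n) set)" where
  "plk W = (\<chi> I. if card I = CARD('n) then det (\<chi> a b. W $ (enm I a) $ b) else 0)"

text \<open>Induced action on Lambda^{n+1} C^{2n+2}: the (n+1)-st compound matrix.\<close>
definition cmpd :: "complex^('n::finite + 'n)^('n + 'n) \<Rightarrow> complex^(('n + 'n) set)^(('n + 'n) set)" where
  "cmpd M = (\<chi> I J. if card I = CARD('n) \<and> card J = CARD('n)
                    then det (\<chi> a b. M $ (enm I a) $ (enm J b)) else 0)"

text \<open>n-planes, given by a frame of n+1 linearly independent columns.\<close>
definition nplane_frame :: "complex^'n^('n::finite + 'n) \<Rightarrow> bool" where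
  "nplane_frame W \<longleftrightarrow> inj (\<lambda>x. W *v x)"

definition nplane_pts :: "complex^'n^('n::finite + 'n) \<Rightarrow> (complex^('n + 'n)) set" where
  "nplane_pts W = {W *v x | x. x \<noteq> 0}"

definition normal_seq :: "(complex^('n::finite + 'n)^('n + 'n)) set \<Rightarrow> (nat \<Rightarrow> complex^('n + 'n)^('n + 'n)) \<Rightarrow> bool" where
  "normal_seq G s \<longleftrightarrow> (\<forall>v. s v \<in> G) \<and> (\<forall>v w. v \<noteq> w \<longrightarrow> \<not> proj_equiv (s v) (s w))
     \<and> (\<exists>T. conv_normalized s T) \<and> (\<exists>T. conv_normalized (\<lambda>v. cmpd (s v)) T)"

definition limit_nplane :: "(complex^('n::finite + 'n)^('n + 'n)) set \<Rightarrow> complex^'n^('n + 'n) \<Rightarrow> bool" where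
  "limit_nplane G W \<longleftrightarrow> nplane_frame W \<and>
     (\<exists>s T. normal_seq G s \<and> conv_normalized (\<lambda>v. cmpd (s v)) T \<and> plk W \<in> limit_image T)"

definition Omega :: "(complex^('n::finite + 'n)^('n + 'n)) set \<Rightarrow> (complex^('n + 'n)) set" where
  "Omega G = {z. z \<noteq> 0 \<and> \<not> (\<exists>W. limit_nplane G W \<and> z \<in> nplane_pts W)}"

definition proj_domain :: "(complex^'m) set \<Rightarrow> bool" where
  "proj_domain U \<longleftrightarrow> open U \<and> connected U \<and> U \<noteq> {} \<and> 0 \<notin> U
     \<and> (\<forall>c z. c \<noteq> 0 \<longrightarrow> z \<in> U \<longrightarrow> c *s z \<in> U)"

definition type_L :: "(complex^('n::finite + 'n)^('n + 'n)) set \<Rightarrow> bool" where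
  "type_L G \<longleftrightarrow> pgl_subgroup G \<and> pgl_discrete G \<and>
     (\<exists>U. proj_domain U \<and> U \<subseteq> Omega G \<and> (\<exists>W. nplane_frame W \<and> nplane_pts W \<subseteq> U))"

definition zp :: "complex^('n::finite + 'n) \<Rightarrow> complex^'n" where
  "zp z = (\<chi> i. z $ Inl i)"

definition zpp :: "complex^('n::finite + 'n) \<Rightarrow> complex^'n" where
  "zpp z = (\<chi> i. z $ Inr i)"

definition Cblk :: "complex^('n::finite + 'n)^('n + 'n) \<Rightarrow> complex^'n^'n" where
  "Cblk g = (\<chi> i j. g $ Inr i $ Inl j)"

definition Dblk :: "complex^('n::finite + 'n)^('n + 'n) \<Rightarrow> complex^'n^'n" where
  "Dblk g = (\<chi> i j. g $ Inr i $ Inr j)"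

definition VR :: "real \<Rightarrow> (complex^('n::finite + 'n)) set" where
  "VR R = {z. norm (zp z) > R * norm (zpp z)}"

text \<open>Elements of Gamma minus 1, via their SL representatives.\<close>
definition Gstar :: "(complex^('n::finite + 'n)^('n + 'n)) set \<Rightarrow> (complex^('n + 'n)^('n + 'n)) set" where
  "Gstar G = {g \<in> G. det g = 1 \<and> \<not> is_scalar_mat g}"

definition Deltabar :: "(complex^('n::finite + 'n)^('n + 'n)) set \<Rightarrow> (complex^('n + 'n)) set" where
  "Deltabar G = {z. z \<noteq> 0 \<and>
     (\<forall>g\<in>Gstar G. norm (zpp z) \<le> norm (Cblk g *v zp z + Dblk g *v zpp z))}"

definition Fregion :: "(complex^('n::finite + 'n)^('n + 'n)) set \<Rightarrow> (complex^('n + 'n)) set" where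
  "Fregion G = interior (Deltabar G)"

end

theory Submission
  imports Defs
begin

text \<open>Write \<open>C = C\<^sub>g\<close> and \<open>D = D\<^sub>g\<close>. Since \<open>g(V\<^sub>R)\<close> misses \<open>V\<^sub>R\<close>, every \<open>z\<close> with
  \<open>C z' + D z'' = 0\<close> (i.e. \<open>g z\<close> has vanishing \<open>z''\<close>-part) satisfies \<open>|z'| \<le> R |z''|\<close>; in
  particular \<open>C\<close> is injective. If \<open>|C\<^sup>-\<^sup>1| \<le> M\<close>, splitting \<open>z' = u + C\<^sup>-\<^sup>1 y\<close> with
  \<open>y = C z' + D z''\<close> and \<open>C u + D z'' = 0\<close> gives \<open>|z'| \<le> R |z''| + M |y|\<close>, so the open set
  \<open>V\<^sub>R\<^sub>+\<^sub>M\<close> lies in every \<open>\<Delta>\<^sub>g\<close>, hence in \<open>F\<close>. Conversely each \<open>\<Delta>\<^sub>g\<close> is closed, so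
  \<open>V\<^sub>R\<^sub>' \<subseteq> closure F \<subseteq> \<Delta>\<^sub>g\<close>; the points with \<open>|z''| = 2|y|\<close> and \<open>z' = C\<^sup>-\<^sup>1(\<plusminus>y - D z'')\<close>
  lie outside \<open>\<Delta>\<^sub>g\<close>, hence outside \<open>V\<^sub>R\<^sub>'\<close>, and averaging the two bounds gives
  \<open>|C\<^sup>-\<^sup>1 y| \<le> 2R' |y|\<close>.\<close>

definition zjoin :: "complex^'n \<Rightarrow> complex^'n \<Rightarrow> complex^('n::finite + 'n)" where
  "zjoin a b = (\<chi> k. case k of Inl i \<Rightarrow> a $ i | Inr i \<Rightarrow> b $ i)"

definition Delta_blk :: "complex^('n::finite + 'n)^('n + 'n) \<Rightarrow> (complex^('n + 'n)) set" where
  "Delta_blk g = {z. norm (zpp z) \<le> norm (Cblk g *v zp z + Dblk g *v zpp z)}"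

lemma zp_zjoin [simp]: "zp (zjoin a b) = a"
  by (simp add: zp_def zjoin_def vec_eq_iff)

lemma zpp_zjoin [simp]: "zpp (zjoin a b) = b"
  by (simp add: zpp_def zjoin_def vec_eq_iff)

lemma zjoin_zp_zpp: "zjoin (zp z) (zpp z) = z"
  by (simp add: zp_def zpp_def zjoin_def vec_eq_iff split: sum.split)

lemma zero_iff_zp_zpp: "z = 0 \<longleftrightarrow> zp z = 0 \<and> zpp z = 0"
proof -
  have "zjoin 0 0 = 0"
    by (simp add: zjoin_def vec_eq_iff split: sum.split)
  then show ?thesis
    by (metis zjoin_zp_zpp zp_zjoin zpp_zjoin)
qed

lemma zpp_matrix_vector_mult: "zpp (g *v z) = Cblk g *v zp z + Dblk g *v zpp z"
proof -
  have "(g *v z) $ Inr i = (Cblk g *v zp z + Dblk g *v zpp z) $ i" for i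
  proof -
    have "(g *v z) $ Inr i = (\<Sum>k\<in>UNIV <+> UNIV. g $ Inr i $ k * z $ k)"
      by (simp only: matrix_vector_mult_def UNIV_Plus_UNIV vec_lambda_beta)
    also have "\<dots> = (Cblk g *v zp z + Dblk g *v zpp z) $ i"
      by (simp only: sum.Plus[OF finite finite])
         (simp add: matrix_vector_mult_def Cblk_def Dblk_def zp_def zpp_def o_def)
    finally show ?thesis .
  qed
  then show ?thesis by (simp add: zpp_def vec_eq_iff)
qed

lemma bounded_linear_matrix_vector_mult: "bounded_linear (\<lambda>x. (M::complex^'n^'m) *v x)"
  using linear_conv_bounded_linear matrix_vector_mul_linear by blast

lemma continuous_on_zp: "continuous_on S zp"
  by (intro linear_continuous_on linear_conv_bounded_linear[THEN iffD1])
     (simp add: linear_iff zp_def vec_eq_iff)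

lemma continuous_on_zpp: "continuous_on S zpp"
  by (intro linear_continuous_on linear_conv_bounded_linear[THEN iffD1])
     (simp add: linear_iff zpp_def vec_eq_iff)

lemma open_VR: "open (VR r)"
  unfolding VR_def
  by (intro open_Collect_less continuous_intros continuous_on_zp continuous_on_zpp)

lemma zero_notin_VR: "(0 :: complex^('n::finite + 'n)) \<notin> VR r"
  using zero_iff_zp_zpp[of "0 :: complex^('n + 'n)"] by (simp add: VR_def)

lemma closed_Delta_blk: "closed (Delta_blk g)"
proof -
  have "Delta_blk g = {z. norm (zpp z) \<le> norm (zpp (g *v z))}"
    by (simp add: Delta_blk_def zpp_matrix_vector_mult)
  also have "closed \<dots>"
    by (intro closed_Collect_le continuous_on_norm continuous_on_zpp
        continuous_on_compose2[OF continuous_on_zpp linear_continuous_on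
          [OF bounded_linear_matrix_vector_mult]]) auto
  finally show ?thesis .
qed

lemma matrix_inv_cancel:
  fixes C :: "complex^'n^'n"
  assumes "invertible C"
  shows "C *v (matrix_inv C *v y) = y"
proof -
  have "C ** matrix_inv C = mat 1"
    using assms unfolding invertible_def matrix_inv_def by (rule someI2_ex) blast
  then show ?thesis by (simp add: matrix_vector_mul_assoc)
qed

lemma zpp_kernel_outside_VR:
  fixes g :: "complex^('n::finite + 'n)^('n + 'n)"
  assumes disj: "\<forall>g\<in>G. \<not> is_scalar_mat g \<longrightarrow> (\<lambda>z. g *v z) ` VR R \<inter> VR R = {}"
    and "g \<in> G" "\<not> is_scalar_mat g" "invertible g"
    and zpp0: "zpp (g *v z) = 0"
  shows "norm (zp z) \<le> R * norm (zpp z)"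
proof (rule ccontr)
  assume "\<not> ?thesis"
  then have z: "z \<in> VR R" by (simp add: VR_def)
  then have "g *v z \<noteq> 0"
    using \<open>invertible g\<close> zero_notin_VR
    by (metis invertible_def matrix_vector_mul_assoc matrix_vector_mul_lid matrix_vector_mult_0_right)
  then have "g *v z \<in> VR R"
    using zpp0 by (simp add: VR_def zero_iff_zp_zpp)
  with z disj assms(2,3) show False by blast
qed

lemma invertible_Cblk:
  fixes g :: "complex^('n::finite + 'n)^('n + 'n)"
  assumes "\<And>z. zpp (g *v z) = 0 \<Longrightarrow> norm (zp z) \<le> R * norm (zpp z)"
  shows "invertible (Cblk g)"
proof -
  have "x = 0" if "Cblk g *v x = 0" for x
    using assms[of "zjoin x 0"] that by (simp add: zpp_matrix_vector_mult)
  then show ?thesis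
    using invertible_left_inverse matrix_left_invertible_ker by blast
qed

lemma VR_subset_Delta_blk:
  fixes g :: "complex^('n::finite + 'n)^('n + 'n)"
  assumes kernel: "\<And>z. zpp (g *v z) = 0 \<Longrightarrow> norm (zp z) \<le> R * norm (zpp z)"
    and M: "M > 0" "onorm (\<lambda>y. matrix_inv (Cblk g) *v y) \<le> M"
  shows "VR (R + M) \<subseteq> Delta_blk g"
proof
  fix z :: "complex^('n + 'n)"
  assume "z \<in> VR (R + M)"
  then have zV: "(R + M) * norm (zpp z) < norm (zp z)" by (simp add: VR_def)
  define y where "y = Cblk g *v zp z + Dblk g *v zpp z"
  define u where "u = zp z - matrix_inv (Cblk g) *v y"
  have "zpp (g *v zjoin u (zpp z)) = 0"
    using matrix_inv_cancel[OF invertible_Cblk[OF kernel]]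
    by (simp add: zpp_matrix_vector_mult u_def y_def matrix_vector_mult_diff_distrib)
  then have "norm u \<le> R * norm (zpp z)"
    using kernel by fastforce
  moreover have "norm (matrix_inv (Cblk g) *v y) \<le> M * norm y"
    using onorm[OF bounded_linear_matrix_vector_mult] M(2) norm_ge_zero
    by (meson mult_right_mono order_trans)
  moreover have "norm (zp z) \<le> norm u + norm (matrix_inv (Cblk g) *v y)"
    by (metis u_def diff_add_cancel norm_triangle_ineq)
  ultimately have "M * norm (zpp z) < M * norm y"
    using zV by (simp add: algebra_simps)
  with M(1) show "z \<in> Delta_blk g"
    by (simp add: Delta_blk_def y_def)
qed

lemma onorm_matrix_inv_Cblk_le:
  fixes g :: "complex^('n::finite + 'n)^('n + 'n)"
  assumes "invertible (Cblk g)" "R' > 0" and sub: "VR R' \<subseteq> Delta_blk g"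
  shows "onorm (\<lambda>y. matrix_inv (Cblk g) *v y) \<le> 2 * R'"
proof (rule onorm_bound)
  fix y :: "complex^'n"
  let ?C = "Cblk g" and ?D = "Dblk g"
  show "norm (matrix_inv ?C *v y) \<le> 2 * R' * norm y"
  proof (cases "y = 0")
    case False
    obtain v :: "complex^'n" where v: "norm v = 2 * norm y"
      using vector_choose_size[of "2 * norm y"] by auto
    have half: "norm (matrix_inv ?C *v (s - ?D *v v)) \<le> R' * norm v" if "norm s = norm y" for s
    proof -
      let ?z = "zjoin (matrix_inv ?C *v (s - ?D *v v)) v"
      have "?z \<notin> Delta_blk g"
        using matrix_inv_cancel[OF assms(1)] that v False by (simp add: Delta_blk_def)
      then have "?z \<notin> VR R'"
        using sub by blast
      then show ?thesis
        by (simp add: VR_def not_less)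
    qed
    have "2 *\<^sub>R (matrix_inv ?C *v y)
        = matrix_inv ?C *v (y - ?D *v v) - matrix_inv ?C *v (- y - ?D *v v)"
      by (simp add: matrix_vector_mult_diff_distrib scaleR_2
          linear_neg[OF matrix_vector_mul_linear])
    then have "2 * norm (matrix_inv ?C *v y)
        \<le> norm (matrix_inv ?C *v (y - ?D *v v)) + norm (matrix_inv ?C *v (- y - ?D *v v))"
      by (metis norm_scaleR abs_numeral norm_triangle_ineq4)
    also have "\<dots> \<le> 2 * (R' * norm v)"
      using half[of y] half[of "- y"] by simp
    finally show ?thesis
      using v by simp
  qed simp
qed (use assms(2) in simp)

lemma closure_Fregion_subset_Delta_blk:
  assumes "g \<in> Gstar G"
  shows "closure (Fregion G) \<subseteq> Delta_blk g"
proof -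
  have "Deltabar G \<subseteq> Delta_blk g"
    using assms by (auto simp: Deltabar_def Delta_blk_def)
  then show ?thesis
    unfolding Fregion_def
    by (meson closed_Delta_blk closure_minimal interior_subset order_trans)
qed

lemma VR_subset_closure_Fregion:
  assumes "\<And>g. g \<in> Gstar G \<Longrightarrow> VR r \<subseteq> Delta_blk g"
  shows "VR r \<subseteq> closure (Fregion G)"
proof -
  have "VR r \<subseteq> Deltabar G"
    using assms zero_notin_VR by (fastforce simp: Deltabar_def Delta_blk_def)
  then show ?thesis
    unfolding Fregion_def using interior_maximal[OF _ open_VR] closure_subset by blast
qed

theorem proposition7p6:
  fixes G :: "(complex^('n::finite + 'n)^('n + 'n)) set" and R :: real
  assumes "type_L G"
    and "R > 0"
    and "VR R \<subseteq> Omega G"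
    and "\<forall>g\<in>G. \<not> is_scalar_mat g \<longrightarrow> (\<lambda>z. g *v z) ` VR R \<inter> VR R = {}"
  shows "bounded {onorm (\<lambda>x. matrix_inv (Cblk g) *v x) | g. g \<in> Gstar G}
         \<longleftrightarrow> (\<exists>R'>0. VR R' \<subseteq> closure (Fregion G))"
proof -
  have kernel: "norm (zp z) \<le> R * norm (zpp z)" if "g \<in> Gstar G" "zpp (g *v z) = 0" for g z
    using assms(1) that zpp_kernel_outside_VR[OF assms(4)]
    unfolding type_L_def pgl_subgroup_def Gstar_def by blast
  show ?thesis
  proof
    assume "bounded {onorm (\<lambda>x. matrix_inv (Cblk g) *v x) | g. g \<in> Gstar G}"
    then obtain M where "M > 0" "\<And>g. g \<in> Gstar G \<Longrightarrow> onorm (\<lambda>x. matrix_inv (Cblk g) *v x) \<le> M"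
      unfolding bounded_pos by fastforce
    then have "VR (R + M) \<subseteq> closure (Fregion G)"
      using VR_subset_closure_Fregion VR_subset_Delta_blk kernel by metis
    with \<open>M > 0\<close> \<open>R > 0\<close> show "\<exists>R'>0. VR R' \<subseteq> closure (Fregion G)"
      by (intro exI[of _ "R + M"]) auto
  next
    assume "\<exists>R'>0. VR R' \<subseteq> closure (Fregion G)"
    then obtain R' where "R' > 0" "VR R' \<subseteq> closure (Fregion G)" by blast
    then have "onorm (\<lambda>x. matrix_inv (Cblk g) *v x) \<le> 2 * R'" if "g \<in> Gstar G" for g
      using that kernel invertible_Cblk onorm_matrix_inv_Cblk_le closure_Fregion_subset_Delta_blk
      by (metis order_trans)
    then show "bounded {onorm (\<lambda>x. matrix_inv (Cblk g) *v x) | g. g \<in> Gstar G}"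
      unfolding bounded_iff
      by (intro exI[of _ "2 * R'"]) (auto simp: onorm_pos_le[OF bounded_linear_matrix_vector_mult])
  qed
qed

end
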